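(* Assume (A1)–(A3) and let $\bar u_{\bar e}\in S(\bar e)$. Then $\widehat N((\bar e,\bar u_{\bar e});\operatorname{gph}\mathcal U_{ad})=\{(e^*,u^* )\in E^*\times L^2(\Omega): e^*=(0,0,e^*_\alpha,e^*_\beta),\ u^*=-e^*_\alpha-e^*_\beta,\ e^*_\alpha\ge0\text{ on }\Omega_1(\bar e,\bar u_{\bar e}),\ e^*_\alpha=0\text{ on }\Omega\setminus\Omega_1(\bar e,\bar u_{\bar e}),\ e^*_\beta\le0\text{ on }\Omega_3(\bar e,\bar u_{\bar e}),\ e^*_\beta=0\text{ on }\Omega\setminus\Omega_3(\bar e,\bar u_{\bar e})\}$.
   Context: Let $\Omega\subset\mathbb R^N$, $N\in\{1,2,3\}$; $\alpha,\beta\in L^\infty(\Omega)$, $\alpha\le\beta$, $\alpha\not\equiv\beta$; $\zeta\in L^2(\Omega)$, $\zeta\ge0$. $Ay=-\sum_{i,j}\partial_{x_j}(a_{ij}\partial_{x_i}y)$. $L,f$ Carathéodory, $C^2$ in $y$, with (A1) $f(\cdot,0)\in L^{\bar p}$, $\bar p>N/2$, $\partial f/\partial y\ge0$, $|\partial f/\partial y|+|\partial^2f/\partial y^2|\le C_{f,M}$ for $|y|\le M$, $\partial^2f/\partial y^2(x,\cdot)$ uniformly continuous on $[-M,M]$ uniformly in $x$; (A2) $L(\cdot,0)\in L^1$, $|\partial L/\partial y|\le\psi_M\in L^{\bar p}$, $|\partial^2L/\partial y^2|\le C_{L,M}$ for $|y|\le M$, $\partial^2L/\partial y^2(x,\cdot)$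 uniformly continuous likewise; (A3) $\Omega$ open bounded with Lipschitz boundary $\Gamma$, $\mathcal Q\subset L^2(\Omega)$ closed convex bounded with $\mathcal U_{ad}(e)\cap\operatorname{int}\mathcal Q\ne\emptyset$ for some $e$, $a_{ij}\in C(\bar\Omega)$ uniformly elliptic. $y_u$ solves $Ay+f(x,y)=u$, $y=0$ on $\Gamma$; $J(u)=\int_\Omega L(x,y_u)+\frac12\int_\Omega\zeta u^2$. $E=L^2(\Omega)^4$, $e=(e_y,e_J,e_\alpha,e_\beta)$ with sum norm; $\mathcal U_{ad}(e)=\{u\in L^2:\alpha+e_\alpha\le u\le\beta+e_\beta\text{ a.e.}\}$ viewed as a multifunction $E\rightrightarrows L^2(\Omega)$; $\mathcal G(e)=\mathcal U_{ad}(e)\cap\mathcal Q$; $\mathcal J(u,e)=J(u+e_y)+(e_J,y_{u+e_y})_{L^2}$; $S(e)=\{u\in\mathcal G(e):\mathcal J(u,e)=\inf_{\mathcal G(e)}\mathcal J(\cdot,e)\}$. $\Omega_1(e,u)=\{x:u(x)=\alpha(x)+e_\alpha(x)\}$, $\Omega_3(e,u)=\{x:u(x)=\beta(x)+e_\beta(x)\}$. $\widehat N$ denotes the regular (Fréchet) normal cone. *)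

theory Defs
  imports "HOL-Analysis.Analysis"
begin

type_synonym 'n fn = "real^'n \<Rightarrow> real"
type_synonym 'n pert = "'n fn \<times> 'n fn \<times> 'n fn \<times> 'n fn"

section \<open>L^2(Omega): square integrable functions (elements are representatives)\<close>

definition L2sp :: "(real^'n) set \<Rightarrow> 'n fn set" where
  "L2sp \<Omega> = {f. f \<in> borel_measurable (lebesgue_on \<Omega>) \<and>
                  integrable (lebesgue_on \<Omega>) (\<lambda>x. (f x)^2)}"

definition l2ip :: "(real^'n) set \<Rightarrow> 'n fn \<Rightarrow> 'n fn \<Rightarrow> real" where
  "l2ip \<Omega> f g = integral\<^sup>L (lebesgue_on \<Omega>) (\<lambda>x. f x * g x)"

definition l2nrm :: "(real^'n) set \<Rightarrow> 'n fn \<Rightarrow> real" where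
  "l2nrm \<Omega> f = sqrt (integral\<^sup>L (lebesgue_on \<Omega>) (\<lambda>x. (f x)^2))"

definition Linf :: "(real^'n) set \<Rightarrow> 'n fn set" where
  "Linf \<Omega> = {f. f \<in> borel_measurable (lebesgue_on \<Omega>) \<and>
                 (\<exists>C. AE x in lebesgue_on \<Omega>. \<bar>f x\<bar> \<le> C)}"

definition Lp :: "(real^'n) set \<Rightarrow> real \<Rightarrow> 'n fn set" where
  "Lp \<Omega> p = {f. f \<in> borel_measurable (lebesgue_on \<Omega>) \<and>
                 integrable (lebesgue_on \<Omega>) (\<lambda>x. \<bar>f x\<bar> powr p)}"

definition e_y :: "'n pert \<Rightarrow> 'n fn" where "e_y e = fst e"
definition e_J :: "'n pert \<Rightarrow> 'n fn" where "e_J e = fst (snd e)"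
definition e_al :: "'n pert \<Rightarrow> 'n fn" where "e_al e = fst (snd (snd e))"
definition e_be :: "'n pert \<Rightarrow> 'n fn" where "e_be e = snd (snd (snd e))"

definition Esp :: "(real^'n) set \<Rightarrow> 'n pert set" where
  "Esp \<Omega> = {e. e_y e \<in> L2sp \<Omega> \<and> e_J e \<in> L2sp \<Omega> \<and> e_al e \<in> L2sp \<Omega> \<and> e_be e \<in> L2sp \<Omega>}"

definition Enrm :: "(real^'n) set \<Rightarrow> 'n pert \<Rightarrow> real" where
  "Enrm \<Omega> e = l2nrm \<Omega> (e_y e) + l2nrm \<Omega> (e_J e) + l2nrm \<Omega> (e_al e) + l2nrm \<Omega> (e_be e)"

text \<open>duality pairing of E* (identified with L^2^4 via Riesz) with E\<close>
definition Epair :: "(real^'n) set \<Rightarrow> 'n pert \<Rightarrow> 'n pert \<Rightarrow> real" where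
  "Epair \<Omega> es e = l2ip \<Omega> (e_y es) (e_y e) + l2ip \<Omega> (e_J es) (e_J e)
                 + l2ip \<Omega> (e_al es) (e_al e) + l2ip \<Omega> (e_be es) (e_be e)"

definition Esub :: "'n pert \<Rightarrow> 'n pert \<Rightarrow> 'n pert" where
  "Esub e e' = (e_y e - e_y e', e_J e - e_J e', e_al e - e_al e', e_be e - e_be e')"

definition Pnrm :: "(real^'n) set \<Rightarrow> 'n pert \<times> 'n fn \<Rightarrow> real" where
  "Pnrm \<Omega> z = Enrm \<Omega> (fst z) + l2nrm \<Omega> (snd z)"

definition Ppair :: "(real^'n) set \<Rightarrow> 'n pert \<times> 'n fn \<Rightarrow> 'n pert \<times> 'n fn \<Rightarrow> real" where
  "Ppair \<Omega> zs z = Epair \<Omega> (fst zs) (fst z) + l2ip \<Omega> (snd zs) (snd z)"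

definition Psub :: "'n pert \<times> 'n fn \<Rightarrow> 'n pert \<times> 'n fn \<Rightarrow> 'n pert \<times> 'n fn" where
  "Psub z z' = (Esub (fst z) (fst z'), snd z - snd z')"

text \<open>Regular (Frechet) normal cone to a set C of E x L^2 at zb, as a subset of
  the dual E* x L^2 (identified with E x L^2):
  zs is normal iff limsup_{z -> zb, z in C} <zs, z - zb> / ||z - zb|| <= 0.\<close>
definition frechet_normal_cone ::
  "(real^'n) set \<Rightarrow> ('n pert \<times> 'n fn) set \<Rightarrow> 'n pert \<times> 'n fn \<Rightarrow> ('n pert \<times> 'n fn) set" where
  "frechet_normal_cone \<Omega> C zb =
     {zs. fst zs \<in> Esp \<Omega> \<and> snd zs \<in> L2sp \<Omega> \<and> zb \<in> C \<and>
          (\<forall>\<epsilon>>0. \<exists>\<delta>>0. \<forall>z\<in>C. Pnrm \<Omega> (Psub z zb) < \<delta> \<longrightarrow>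
              Ppair \<Omega> zs (Psub z zb) \<le> \<epsilon> * Pnrm \<Omega> (Psub z zb))}"

definition Uad :: "(real^'n) set \<Rightarrow> 'n fn \<Rightarrow> 'n fn \<Rightarrow> 'n pert \<Rightarrow> 'n fn set" where
  "Uad \<Omega> \<alpha> \<beta> e = {u \<in> L2sp \<Omega>. AE x in lebesgue_on \<Omega>.
                        \<alpha> x + e_al e x \<le> u x \<and> u x \<le> \<beta> x + e_be e x}"

definition gphUad :: "(real^'n) set \<Rightarrow> 'n fn \<Rightarrow> 'n fn \<Rightarrow> ('n pert \<times> 'n fn) set" where
  "gphUad \<Omega> \<alpha> \<beta> = {(e, u). e \<in> Esp \<Omega> \<and> u \<in> Uad \<Omega> \<alpha> \<beta> e}"

definition Omega1 :: "(real^'n) set \<Rightarrow> 'n fn \<Rightarrow> 'n pert \<Rightarrow> 'n fn \<Rightarrow> (real^'n) set" where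
  "Omega1 \<Omega> \<alpha> e u = {x \<in> \<Omega>. u x = \<alpha> x + e_al e x}"

definition Omega3 :: "(real^'n) set \<Rightarrow> 'n fn \<Rightarrow> 'n pert \<Rightarrow> 'n fn \<Rightarrow> (real^'n) set" where
  "Omega3 \<Omega> \<beta> e u = {x \<in> \<Omega>. u x = \<beta> x + e_be e x}"

definition lipschitz_boundary :: "(real^('n::finite)) set \<Rightarrow> bool" where
  "lipschitz_boundary \<Omega> \<longleftrightarrow>
     (\<forall>p\<in>frontier \<Omega>. \<exists>r>0. \<exists>(T::real^'n \<Rightarrow> real^'n) (k::'n) (h::real^'n \<Rightarrow> real) (B::real).
        orthogonal_transformation T \<and> B-lipschitz_on UNIV h \<and>
        (\<forall>z w. (\<forall>i. i \<noteq> k \<longrightarrow> z$i = w$i) \<longrightarrow> h z = h w) \<and>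
        \<Omega> \<inter> ball p r = {x \<in> ball p r. (T (x - p))$k < h (T (x - p))})"

fun dpart :: "('n::finite) list \<Rightarrow> 'n fn \<Rightarrow> 'n fn" where
  "dpart [] \<phi> = \<phi>"
| "dpart (i # is) \<phi> = (\<lambda>x. frechet_derivative (dpart is \<phi>) (at x) (axis i 1))"

definition test_fun :: "(real^('n::finite)) set \<Rightarrow> 'n fn \<Rightarrow> bool" where
  "test_fun \<Omega> \<phi> \<longleftrightarrow> (\<forall>is x. dpart is \<phi> differentiable (at x)) \<and>
      compact (closure {x. \<phi> x \<noteq> 0}) \<and> closure {x. \<phi> x \<noteq> 0} \<subseteq> \<Omega>"

definition weak_deriv :: "(real^('n::finite)) set \<Rightarrow> 'n fn \<Rightarrow> 'n \<Rightarrow> 'n fn \<Rightarrow> bool" where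
  "weak_deriv \<Omega> y i g \<longleftrightarrow> (\<forall>\<phi>. test_fun \<Omega> \<phi> \<longrightarrow>
      integral\<^sup>L (lebesgue_on \<Omega>) (\<lambda>x. y x * dpart [i] \<phi> x) =
      - integral\<^sup>L (lebesgue_on \<Omega>) (\<lambda>x. g x * \<phi> x))"

definition H10 :: "(real^('n::finite)) set \<Rightarrow> 'n fn \<Rightarrow> bool" where
  "H10 \<Omega> y \<longleftrightarrow> y \<in> L2sp \<Omega> \<and>
     (\<exists>G. (\<forall>i. G i \<in> L2sp \<Omega> \<and> weak_deriv \<Omega> y i (G i)) \<and>
        (\<exists>\<phi>s. (\<forall>k. test_fun \<Omega> (\<phi>s k)) \<and>
              (\<lambda>k. l2nrm \<Omega> (\<phi>s k - y)) \<longlonglongrightarrow> 0 \<and>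
              (\<forall>i. (\<lambda>k. l2nrm \<Omega> (dpart [i] (\<phi>s k) - G i)) \<longlonglongrightarrow> 0)))"

text \<open>y is a (bounded) weak solution of  A y + f(x,y) = u in Omega, y = 0 on the boundary,
  with A y = - sum_{i,j} d_{x_j}(a_ij d_{x_i} y).\<close>
definition state_sol ::
  "(real^('n::finite)) set \<Rightarrow> ('n \<Rightarrow> 'n \<Rightarrow> 'n fn) \<Rightarrow> (real^'n \<Rightarrow> real \<Rightarrow> real) \<Rightarrow> 'n fn \<Rightarrow> 'n fn \<Rightarrow> bool" where
  "state_sol \<Omega> a f u y \<longleftrightarrow> H10 \<Omega> y \<and> y \<in> Linf \<Omega> \<and>
     (\<exists>G. (\<forall>i. G i \<in> L2sp \<Omega> \<and> weak_deriv \<Omega> y i (G i)) \<and>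
       (\<forall>\<phi>. test_fun \<Omega> \<phi> \<longrightarrow>
          integral\<^sup>L (lebesgue_on \<Omega>)
            (\<lambda>x. (\<Sum>i\<in>UNIV. \<Sum>j\<in>UNIV. a i j x * G i x * dpart [j] \<phi> x) + f x (y x) * \<phi> x)
          = integral\<^sup>L (lebesgue_on \<Omega>) (\<lambda>x. u x * \<phi> x)))"

definition ystate ::
  "(real^('n::finite)) set \<Rightarrow> ('n \<Rightarrow> 'n \<Rightarrow> 'n fn) \<Rightarrow> (real^'n \<Rightarrow> real \<Rightarrow> real) \<Rightarrow> 'n fn \<Rightarrow> 'n fn" where
  "ystate \<Omega> a f u = (SOME y. state_sol \<Omega> a f u y)"

definition Jcost ::
  "(real^('n::finite)) set \<Rightarrow> ('n \<Rightarrow> 'n \<Rightarrow> 'n fn) \<Rightarrow> (real^'n \<Rightarrow> real \<Rightarrow> real) \<Rightarrow>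
   (real^'n \<Rightarrow> real \<Rightarrow> real) \<Rightarrow> 'n fn \<Rightarrow> 'n fn \<Rightarrow> real" where
  "Jcost \<Omega> a f L \<zeta> u =
     integral\<^sup>L (lebesgue_on \<Omega>) (\<lambda>x. L x (ystate \<Omega> a f u x))
     + 1/2 * integral\<^sup>L (lebesgue_on \<Omega>) (\<lambda>x. \<zeta> x * (u x)^2)"

definition Jpert ::
  "(real^('n::finite)) set \<Rightarrow> ('n \<Rightarrow> 'n \<Rightarrow> 'n fn) \<Rightarrow> (real^'n \<Rightarrow> real \<Rightarrow> real) \<Rightarrow>
   (real^'n \<Rightarrow> real \<Rightarrow> real) \<Rightarrow> 'n fn \<Rightarrow> 'n fn \<Rightarrow> 'n pert \<Rightarrow> real" where
  "Jpert \<Omega> a f L \<zeta> u e =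
     Jcost \<Omega> a f L \<zeta> (\<lambda>x. u x + e_y e x) + l2ip \<Omega> (e_J e) (ystate \<Omega> a f (\<lambda>x. u x + e_y e x))"

definition Gfeas :: "(real^'n) set \<Rightarrow> 'n fn \<Rightarrow> 'n fn \<Rightarrow> 'n fn set \<Rightarrow> 'n pert \<Rightarrow> 'n fn set" where
  "Gfeas \<Omega> \<alpha> \<beta> Q e = Uad \<Omega> \<alpha> \<beta> e \<inter> Q"

definition Sopt ::
  "(real^('n::finite)) set \<Rightarrow> ('n \<Rightarrow> 'n \<Rightarrow> 'n fn) \<Rightarrow> (real^'n \<Rightarrow> real \<Rightarrow> real) \<Rightarrow>
   (real^'n \<Rightarrow> real \<Rightarrow> real) \<Rightarrow> 'n fn \<Rightarrow> 'n fn \<Rightarrow> 'n fn \<Rightarrow> 'n fn set \<Rightarrow> 'n pert \<Rightarrow> 'n fn set" where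
  "Sopt \<Omega> a f L \<zeta> \<alpha> \<beta> Q e =
     {u \<in> Gfeas \<Omega> \<alpha> \<beta> Q e. \<forall>v \<in> Gfeas \<Omega> \<alpha> \<beta> Q e. Jpert \<Omega> a f L \<zeta> u e \<le> Jpert \<Omega> a f L \<zeta> v e}"

end

theory Submission imports Defs begin

text \<open>The graph of the admissible-control multifunction is convex, so its regular normal cone at
  \<open>(e0, u0)\<close> is the polar cone of the graph shifted by \<open>-(e0, u0)\<close>. Testing the polar inequality
  with directions that move \<open>e\<^sub>y\<close> or \<open>e\<^sub>J\<close> alone, and with one that shifts \<open>u\<close>, \<open>e\<^sub>\<alpha>\<close> and
  \<open>e\<^sub>\<beta>\<close> by the same function, forces \<open>e\<^sup>*\<^sub>y = e\<^sup>*\<^sub>J = 0\<close> and \<open>u\<^sup>* = - e\<^sup>*\<^sub>\<alpha> - e\<^sup>*\<^sub>\<beta>\<close>; moving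
  \<open>e\<^sub>\<alpha>\<close> along the truncated direction \<open>min e\<^sup>*\<^sub>\<alpha> (u0 - \<alpha> - e0\<^sub>\<alpha>)\<close> yields the sign and
  complementarity conditions on \<open>e\<^sup>*\<^sub>\<alpha>\<close>, and symmetrically for \<open>e\<^sup>*\<^sub>\<beta>\<close>. Conversely, these
  conditions make the integrand of the pairing pointwise nonpositive. Only the feasibility of the
  reference control enters.\<close>

lemma L2sp_dominated:
  assumes "f \<in> L2sp \<Omega>" "g \<in> borel_measurable (lebesgue_on \<Omega>)"
    and "AE x in lebesgue_on \<Omega>. \<bar>g x\<bar> \<le> \<bar>f x\<bar>"
  shows "g \<in> L2sp \<Omega>"
proof -
  have "integrable (lebesgue_on \<Omega>) (\<lambda>x. (g x)^2)"
  proof (rule Bochner_Integration.integrable_bound)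
    show "integrable (lebesgue_on \<Omega>) (\<lambda>x. (f x)^2)" using assms(1) by (simp add: L2sp_def)
    show "(\<lambda>x. (g x)^2) \<in> borel_measurable (lebesgue_on \<Omega>)" using assms(2) by measurable
    show "AE x in lebesgue_on \<Omega>. norm ((g x)^2) \<le> norm ((f x)^2)"
      using assms(3) by eventually_elim (simp add: abs_le_square_iff)
  qed
  then show ?thesis using assms(2) by (simp add: L2sp_def)
qed

lemma integrable_L2sp_mult:
  assumes "f \<in> L2sp \<Omega>" "g \<in> L2sp \<Omega>"
  shows "integrable (lebesgue_on \<Omega>) (\<lambda>x. f x * g x)"
proof (rule Bochner_Integration.integrable_bound)
  show "integrable (lebesgue_on \<Omega>) (\<lambda>x. (f x)^2 + (g x)^2)"
    using assms by (simp add: L2sp_def)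
  show "(\<lambda>x. f x * g x) \<in> borel_measurable (lebesgue_on \<Omega>)"
    using assms by (auto simp: L2sp_def intro!: borel_measurable_times)
  have "\<bar>a * b\<bar> \<le> a^2 + b^2" for a b :: real
  proof -
    have "0 \<le> (\<bar>a\<bar> - \<bar>b\<bar>)^2" by simp
    then have "2 * (\<bar>a\<bar> * \<bar>b\<bar>) \<le> a^2 + b^2" by (simp add: power2_diff)
    moreover have "0 \<le> \<bar>a\<bar> * \<bar>b\<bar>" by simp
    ultimately show ?thesis unfolding abs_mult by linarith
  qed
  then show "AE x in lebesgue_on \<Omega>. norm (f x * g x) \<le> norm ((f x)^2 + (g x)^2)"
    by simp
qed

lemma L2sp_add:
  assumes "f \<in> L2sp \<Omega>" "g \<in> L2sp \<Omega>"
  shows "(\<lambda>x. f x + g x) \<in> L2sp \<Omega>"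
proof -
  have "integrable (lebesgue_on \<Omega>) (\<lambda>x. (f x)^2 + (g x)^2 + 2 * (f x * g x))"
    using assms integrable_L2sp_mult[OF assms] by (simp add: L2sp_def)
  then show ?thesis
    using assms by (auto simp: L2sp_def power2_sum mult.assoc)
qed

lemma L2sp_cmult:
  assumes "f \<in> L2sp \<Omega>"
  shows "(\<lambda>x. c * f x) \<in> L2sp \<Omega>"
  using assms by (auto simp: L2sp_def power_mult_distrib)

lemma L2sp_zero: "(\<lambda>x. 0) \<in> L2sp \<Omega>"
  by (simp add: L2sp_def)

lemma L2sp_uminus: "f \<in> L2sp \<Omega> \<Longrightarrow> (\<lambda>x. - f x) \<in> L2sp \<Omega>"
  using L2sp_cmult[of f \<Omega> "-1"] by simp

lemma L2sp_diff:
  assumes "f \<in> L2sp \<Omega>" "g \<in> L2sp \<Omega>"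
  shows "(\<lambda>x. f x - g x) \<in> L2sp \<Omega>"
  using L2sp_add[OF assms(1) L2sp_uminus[OF assms(2)]] by simp

lemma l2ip_zero_right [simp]: "l2ip \<Omega> f (\<lambda>x. 0) = 0"
  by (simp add: l2ip_def)

lemma l2ip_cmult_right: "l2ip \<Omega> f (\<lambda>x. c * g x) = c * l2ip \<Omega> f g"
  by (simp add: l2ip_def mult.left_commute)

lemma l2ip_add_left:
  assumes "f \<in> L2sp \<Omega>" "g \<in> L2sp \<Omega>" "h \<in> L2sp \<Omega>"
  shows "l2ip \<Omega> (\<lambda>x. f x + g x) h = l2ip \<Omega> f h + l2ip \<Omega> g h"
  using integrable_L2sp_mult[OF assms(1,3)] integrable_L2sp_mult[OF assms(2,3)]
  by (simp add: l2ip_def distrib_right)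

lemma l2nrm_cmult: "0 \<le> c \<Longrightarrow> l2nrm \<Omega> (\<lambda>x. c * g x) = c * l2nrm \<Omega> g"
  by (simp add: l2nrm_def power_mult_distrib real_sqrt_mult)

lemma AE_mult_eq_0_if_l2ip_nonpos:
  assumes "f \<in> L2sp \<Omega>" "g \<in> L2sp \<Omega>"
    and "AE x in lebesgue_on \<Omega>. 0 \<le> f x * g x" "l2ip \<Omega> f g \<le> 0"
  shows "AE x in lebesgue_on \<Omega>. f x * g x = 0"
proof -
  have "0 \<le> l2ip \<Omega> f g" unfolding l2ip_def using assms(3) by (rule integral_nonneg_AE)
  then show ?thesis
    using assms integral_nonneg_eq_0_iff_AE[OF integrable_L2sp_mult[OF assms(1,2)] assms(3)]
    by (simp add: l2ip_def)
qed

lemma AE_zero_if_l2ip_self_nonpos: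
  assumes "f \<in> L2sp \<Omega>" "l2ip \<Omega> f f \<le> 0"
  shows "AE x in lebesgue_on \<Omega>. f x = 0"
  using AE_mult_eq_0_if_l2ip_nonpos[OF assms(1,1) _ assms(2)] by simp

lemma AE_complementarity_if_l2ip_nonpos:
  assumes f: "f \<in> L2sp \<Omega>"
    and g: "g \<in> borel_measurable (lebesgue_on \<Omega>)" "AE x in lebesgue_on \<Omega>. 0 \<le> g x"
    and polar: "\<And>d. d \<in> L2sp \<Omega> \<Longrightarrow> AE x in lebesgue_on \<Omega>. d x \<le> g x \<Longrightarrow> l2ip \<Omega> f d \<le> 0"
  shows "AE x in lebesgue_on \<Omega>. 0 \<le> f x \<and> (g x \<noteq> 0 \<longrightarrow> f x = 0)"
proof -
  define d where "d x = min (f x) (g x)" for x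
  have d: "d \<in> L2sp \<Omega>"
  proof (rule L2sp_dominated[OF f])
    show "d \<in> borel_measurable (lebesgue_on \<Omega>)"
      using f g(1) unfolding d_def L2sp_def by auto
    show "AE x in lebesgue_on \<Omega>. \<bar>d x\<bar> \<le> \<bar>f x\<bar>"
      using g(2) by eventually_elim (auto simp: d_def)
  qed
  have "AE x in lebesgue_on \<Omega>. 0 \<le> f x * d x"
    using g(2) by eventually_elim (auto simp: d_def min_def)
  moreover have "l2ip \<Omega> f d \<le> 0" by (rule polar[OF d]) (simp add: d_def)
  ultimately have "AE x in lebesgue_on \<Omega>. f x * d x = 0"
    by (rule AE_mult_eq_0_if_l2ip_nonpos[OF f d])
  then show ?thesis
    using g(2) by eventually_elim (auto simp: d_def min_def split: if_splits)
qed

definition Pscale :: "real \<Rightarrow> 'n pert \<times> 'n fn \<Rightarrow> 'n pert \<times> 'n fn" where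
  "Pscale t z = ((\<lambda>x. t * e_y (fst z) x, \<lambda>x. t * e_J (fst z) x, \<lambda>x. t * e_al (fst z) x,
                  \<lambda>x. t * e_be (fst z) x), \<lambda>x. t * snd z x)"

lemma Ppair_Pscale: "Ppair \<Omega> zs (Pscale t z) = t * Ppair \<Omega> zs z"
  by (simp add: Ppair_def Epair_def Pscale_def e_y_def e_J_def e_al_def e_be_def
      l2ip_cmult_right algebra_simps)

lemma Pnrm_Pscale: "0 \<le> t \<Longrightarrow> Pnrm \<Omega> (Pscale t z) = t * Pnrm \<Omega> z"
  by (simp add: Pnrm_def Enrm_def Pscale_def e_y_def e_J_def e_al_def e_be_def
      l2nrm_cmult algebra_simps)

lemma Pnrm_nonneg: "0 \<le> Pnrm \<Omega> z"
  by (simp add: Pnrm_def Enrm_def l2nrm_def)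

text \<open>Letting \<open>t \<rightarrow> 0\<close> along \<open>zb + t d \<in> C\<close>, the positive homogeneity of both sides of the defining
  inequality turns \<open>\<le> \<epsilon> \<parallel>t d\<parallel>\<close> into \<open>\<le> \<epsilon> \<parallel>d\<parallel>\<close> for every \<open>\<epsilon> > 0\<close>.\<close>

lemma frechet_normal_cone_feasible_dir:
  assumes zs: "zs \<in> frechet_normal_cone \<Omega> C zb"
    and feasible: "\<And>t. 0 < t \<Longrightarrow> t \<le> 1 \<Longrightarrow> \<exists>z\<in>C. Psub z zb = Pscale t d"
  shows "Ppair \<Omega> zs d \<le> 0"
proof (rule ccontr)
  assume "\<not> Ppair \<Omega> zs d \<le> 0"
  then have pos: "0 < Ppair \<Omega> zs d" by simp
  define N where "N = Pnrm \<Omega> d + 1"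
  have N: "1 \<le> N" using Pnrm_nonneg[of \<Omega> d] by (simp add: N_def)
  define \<epsilon> where "\<epsilon> = Ppair \<Omega> zs d / (2 * N)"
  have "0 < \<epsilon>" using pos N by (simp add: \<epsilon>_def)
  then obtain \<delta> where \<delta>: "0 < \<delta>"
    and normal: "\<And>z. z \<in> C \<Longrightarrow> Pnrm \<Omega> (Psub z zb) < \<delta> \<Longrightarrow>
      Ppair \<Omega> zs (Psub z zb) \<le> \<epsilon> * Pnrm \<Omega> (Psub z zb)"
    using zs unfolding frechet_normal_cone_def by blast
  define t where "t = min 1 (\<delta> / (2 * N))"
  have t: "0 < t" "t \<le> 1" using \<delta> N by (auto simp: t_def)
  then obtain z where z: "z \<in> C" "Psub z zb = Pscale t d" using feasible by blast
  have "t * N \<le> \<delta> / 2" using N by (simp add: t_def min_def field_simps split: if_splits)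
  then have "Pnrm \<Omega> (Psub z zb) < \<delta>"
    using \<delta> t by (simp add: z(2) Pnrm_Pscale N_def algebra_simps)
  from normal[OF z(1) this] have "t * Ppair \<Omega> zs d \<le> t * (\<epsilon> * Pnrm \<Omega> d)"
    using t by (simp add: z(2) Ppair_Pscale Pnrm_Pscale)
  then have "Ppair \<Omega> zs d \<le> \<epsilon> * Pnrm \<Omega> d" using t by simp
  also have "\<dots> < \<epsilon> * N" using \<open>0 < \<epsilon>\<close> by (simp add: N_def)
  also have "\<dots> = Ppair \<Omega> zs d / 2" using N by (simp add: \<epsilon>_def)
  finally show False using pos by simp
qed

lemma frechet_normal_coneI_polar:
  assumes "fst zs \<in> Esp \<Omega>" "snd zs \<in> L2sp \<Omega>" "zb \<in> C"
    and polar: "\<And>z. z \<in> C \<Longrightarrow> Ppair \<Omega> zs (Psub z zb) \<le> 0"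
  shows "zs \<in> frechet_normal_cone \<Omega> C zb"
proof -
  have "Ppair \<Omega> zs (Psub z zb) \<le> \<epsilon> * Pnrm \<Omega> (Psub z zb)" if "z \<in> C" "0 < \<epsilon>" for z \<epsilon>
    using polar[OF that(1)] Pnrm_nonneg[of \<Omega> "Psub z zb"] that(2) by (simp add: order_trans)
  then show ?thesis using assms(1-3) unfolding frechet_normal_cone_def by (auto intro: exI[of _ 1])
qed

lemma gphUad_tuple_iff:
  "((y, J, al, be), u) \<in> gphUad \<Omega> \<alpha> \<beta> \<longleftrightarrow>
     y \<in> L2sp \<Omega> \<and> J \<in> L2sp \<Omega> \<and> al \<in> L2sp \<Omega> \<and> be \<in> L2sp \<Omega> \<and> u \<in> L2sp \<Omega> \<and>
     (AE x in lebesgue_on \<Omega>. \<alpha> x + al x \<le> u x \<and> u x \<le> \<beta> x + be x)"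
  by (auto simp: gphUad_def Esp_def Uad_def e_y_def e_J_def e_al_def e_be_def)

lemma Psub_tuple:
  "Psub ((y, J, al, be), u) ((y0, J0, al0, be0), u0) =
     ((\<lambda>x. y x - y0 x, \<lambda>x. J x - J0 x, \<lambda>x. al x - al0 x, \<lambda>x. be x - be0 x), \<lambda>x. u x - u0 x)"
  by (simp add: Psub_def Esub_def e_y_def e_J_def e_al_def e_be_def fun_diff_def)

lemma Pscale_tuple:
  "Pscale t ((y, J, al, be), u) =
     ((\<lambda>x. t * y x, \<lambda>x. t * J x, \<lambda>x. t * al x, \<lambda>x. t * be x), \<lambda>x. t * u x)"
  by (simp add: Pscale_def e_y_def e_J_def e_al_def e_be_def)

lemma Ppair_tuple:
  "Ppair \<Omega> ((a1, a2, a3, a4), us) ((y, J, al, be), u) =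
     l2ip \<Omega> a1 y + l2ip \<Omega> a2 J + l2ip \<Omega> a3 al + l2ip \<Omega> a4 be + l2ip \<Omega> us u"
  by (simp add: Ppair_def Epair_def e_y_def e_J_def e_al_def e_be_def)

text \<open>By convexity of the graph, the whole segment from the base point to the perturbed point lies
  in the graph.\<close>

lemma frechet_normal_cone_gphUad_dir:
  assumes zs: "((a1, a2, a3, a4), us) \<in> frechet_normal_cone \<Omega> (gphUad \<Omega> \<alpha> \<beta>) ((y0, J0, al0, be0), u0)"
    and L2: "dy \<in> L2sp \<Omega>" "dJ \<in> L2sp \<Omega>" "dal \<in> L2sp \<Omega>" "dbe \<in> L2sp \<Omega>" "du \<in> L2sp \<Omega>"
    and feasible: "AE x in lebesgue_on \<Omega>.
      \<alpha> x + (al0 x + dal x) \<le> u0 x + du x \<and> u0 x + du x \<le> \<beta> x + (be0 x + dbe x)"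
  shows "l2ip \<Omega> a1 dy + l2ip \<Omega> a2 dJ + l2ip \<Omega> a3 dal + l2ip \<Omega> a4 dbe + l2ip \<Omega> us du \<le> 0"
proof -
  have zb: "((y0, J0, al0, be0), u0) \<in> gphUad \<Omega> \<alpha> \<beta>"
    using zs by (simp add: frechet_normal_cone_def)
  then have zb_AE: "AE x in lebesgue_on \<Omega>. \<alpha> x + al0 x \<le> u0 x \<and> u0 x \<le> \<beta> x + be0 x"
    by (simp add: gphUad_tuple_iff)
  have "Ppair \<Omega> ((a1, a2, a3, a4), us) ((dy, dJ, dal, dbe), du) \<le> 0"
  proof (rule frechet_normal_cone_feasible_dir[OF zs])
    fix t :: real assume t: "0 < t" "t \<le> 1"
    define z where "z = ((\<lambda>x. y0 x + t * dy x, \<lambda>x. J0 x + t * dJ x, \<lambda>x. al0 x + t * dal x,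
      \<lambda>x. be0 x + t * dbe x), \<lambda>x. u0 x + t * du x)"
    have "AE x in lebesgue_on \<Omega>. \<alpha> x + (al0 x + t * dal x) \<le> u0 x + t * du x \<and>
        u0 x + t * du x \<le> \<beta> x + (be0 x + t * dbe x)"
      using zb_AE feasible
    proof eventually_elim
      case (elim x)
      have "0 \<le> (1 - t) * (u0 x - \<alpha> x - al0 x) + t * (u0 x + du x - \<alpha> x - al0 x - dal x)"
        "0 \<le> (1 - t) * (\<beta> x + be0 x - u0 x) + t * (\<beta> x + be0 x + dbe x - u0 x - du x)"
        using elim t by (auto intro!: add_nonneg_nonneg mult_nonneg_nonneg)
      then show ?case by (simp add: algebra_simps)
    qed
    then have "z \<in> gphUad \<Omega> \<alpha> \<beta>"
      using zb L2 by (simp add: z_def gphUad_tuple_iff L2sp_add L2sp_cmult)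
    moreover have "Psub z ((y0, J0, al0, be0), u0) = Pscale t ((dy, dJ, dal, dbe), du)"
      by (simp add: z_def Psub_tuple Pscale_tuple)
    ultimately show "\<exists>z\<in>gphUad \<Omega> \<alpha> \<beta>. Psub z ((y0, J0, al0, be0), u0) = Pscale t ((dy, dJ, dal, dbe), du)"
      by blast
  qed
  then show ?thesis by (simp add: Ppair_tuple)
qed

lemma frechet_normal_cone_gphUad_equalities:
  assumes zs: "((a1, a2, a3, a4), us) \<in> frechet_normal_cone \<Omega> (gphUad \<Omega> \<alpha> \<beta>) ((y0, J0, al0, be0), u0)"
  shows "(AE x in lebesgue_on \<Omega>. a1 x = 0) \<and> (AE x in lebesgue_on \<Omega>. a2 x = 0) \<and>
    (AE x in lebesgue_on \<Omega>. us x = - a3 x - a4 x)"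
proof -
  have a: "a1 \<in> L2sp \<Omega>" "a2 \<in> L2sp \<Omega>" "a3 \<in> L2sp \<Omega>" "a4 \<in> L2sp \<Omega>" "us \<in> L2sp \<Omega>"
    using zs by (auto simp: frechet_normal_cone_def Esp_def e_y_def e_J_def e_al_def e_be_def)
  have box: "AE x in lebesgue_on \<Omega>. \<alpha> x + al0 x \<le> u0 x \<and> u0 x \<le> \<beta> x + be0 x"
    using zs by (simp add: frechet_normal_cone_def gphUad_tuple_iff)
  then have box0: "AE x in lebesgue_on \<Omega>. \<alpha> x + (al0 x + 0) \<le> u0 x + 0 \<and> u0 x + 0 \<le> \<beta> x + (be0 x + 0)"
    by simp
  note dir = frechet_normal_cone_gphUad_dir[OF zs] and zero = L2sp_zero[of \<Omega>]
  have "l2ip \<Omega> a1 a1 \<le> 0"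
    using dir[OF a(1) zero zero zero zero box0] by simp
  then have y: "AE x in lebesgue_on \<Omega>. a1 x = 0" by (rule AE_zero_if_l2ip_self_nonpos[OF a(1)])
  have "l2ip \<Omega> a2 a2 \<le> 0"
    using dir[OF zero a(2) zero zero zero box0] by simp
  then have J: "AE x in lebesgue_on \<Omega>. a2 x = 0" by (rule AE_zero_if_l2ip_self_nonpos[OF a(2)])
  define h where "h x = a3 x + a4 x + us x" for x
  have h: "h \<in> L2sp \<Omega>" unfolding h_def by (intro L2sp_add a)
  have "AE x in lebesgue_on \<Omega>. \<alpha> x + (al0 x + h x) \<le> u0 x + h x \<and> u0 x + h x \<le> \<beta> x + (be0 x + h x)"
    using box by eventually_elim simp
  from dir[OF zero zero h h h this] have "l2ip \<Omega> h h \<le> 0"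
    by (simp add: h_def[abs_def] l2ip_add_left L2sp_add a h[unfolded h_def[abs_def]])
  then have "AE x in lebesgue_on \<Omega>. h x = 0" by (rule AE_zero_if_l2ip_self_nonpos[OF h])
  then have "AE x in lebesgue_on \<Omega>. us x = - a3 x - a4 x"
    by eventually_elim (simp add: h_def)
  with y J show ?thesis by blast
qed

lemma frechet_normal_cone_gphUad_lower:
  assumes zs: "((a1, a2, a3, a4), us) \<in> frechet_normal_cone \<Omega> (gphUad \<Omega> \<alpha> \<beta>) ((y0, J0, al0, be0), u0)"
    and \<alpha>: "\<alpha> \<in> borel_measurable (lebesgue_on \<Omega>)"
  shows "(AE x in lebesgue_on \<Omega>. x \<in> Omega1 \<Omega> \<alpha> (y0, J0, al0, be0) u0 \<longrightarrow> 0 \<le> a3 x) \<and>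
    (AE x in lebesgue_on \<Omega>. x \<notin> Omega1 \<Omega> \<alpha> (y0, J0, al0, be0) u0 \<longrightarrow> a3 x = 0)"
proof -
  have a3: "a3 \<in> L2sp \<Omega>"
    using zs by (simp add: frechet_normal_cone_def Esp_def e_al_def)
  have "((y0, J0, al0, be0), u0) \<in> gphUad \<Omega> \<alpha> \<beta>"
    using zs by (simp add: frechet_normal_cone_def)
  then have b: "al0 \<in> L2sp \<Omega>" "u0 \<in> L2sp \<Omega>"
    and box: "AE x in lebesgue_on \<Omega>. \<alpha> x + al0 x \<le> u0 x \<and> u0 x \<le> \<beta> x + be0 x"
    by (simp_all add: gphUad_tuple_iff)
  note zero = L2sp_zero[of \<Omega>]
  have "AE x in lebesgue_on \<Omega>. 0 \<le> a3 x \<and> (u0 x - \<alpha> x - al0 x \<noteq> 0 \<longrightarrow> a3 x = 0)"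
  proof (rule AE_complementarity_if_l2ip_nonpos[OF a3])
    show "(\<lambda>x. u0 x - \<alpha> x - al0 x) \<in> borel_measurable (lebesgue_on \<Omega>)"
      using b \<alpha> by (auto simp: L2sp_def)
    show "AE x in lebesgue_on \<Omega>. 0 \<le> u0 x - \<alpha> x - al0 x"
      using box by eventually_elim simp
    fix d assume d: "d \<in> L2sp \<Omega>" "AE x in lebesgue_on \<Omega>. d x \<le> u0 x - \<alpha> x - al0 x"
    have "AE x in lebesgue_on \<Omega>. \<alpha> x + (al0 x + d x) \<le> u0 x + 0 \<and> u0 x + 0 \<le> \<beta> x + (be0 x + 0)"
      using box d(2) by eventually_elim simp
    from frechet_normal_cone_gphUad_dir[OF zs zero zero d(1) zero zero this]
    show "l2ip \<Omega> a3 d \<le> 0" by simp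
  qed
  then show ?thesis
    using AE_space by (intro conjI; eventually_elim, auto simp: Omega1_def e_al_def)
qed

lemma frechet_normal_cone_gphUad_upper:
  assumes zs: "((a1, a2, a3, a4), us) \<in> frechet_normal_cone \<Omega> (gphUad \<Omega> \<alpha> \<beta>) ((y0, J0, al0, be0), u0)"
    and \<beta>: "\<beta> \<in> borel_measurable (lebesgue_on \<Omega>)"
  shows "(AE x in lebesgue_on \<Omega>. x \<in> Omega3 \<Omega> \<beta> (y0, J0, al0, be0) u0 \<longrightarrow> a4 x \<le> 0) \<and>
    (AE x in lebesgue_on \<Omega>. x \<notin> Omega3 \<Omega> \<beta> (y0, J0, al0, be0) u0 \<longrightarrow> a4 x = 0)"
proof -
  have a4: "a4 \<in> L2sp \<Omega>"
    using zs by (simp add: frechet_normal_cone_def Esp_def e_be_def)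
  have "((y0, J0, al0, be0), u0) \<in> gphUad \<Omega> \<alpha> \<beta>"
    using zs by (simp add: frechet_normal_cone_def)
  then have b: "be0 \<in> L2sp \<Omega>" "u0 \<in> L2sp \<Omega>"
    and box: "AE x in lebesgue_on \<Omega>. \<alpha> x + al0 x \<le> u0 x \<and> u0 x \<le> \<beta> x + be0 x"
    by (simp_all add: gphUad_tuple_iff)
  note zero = L2sp_zero[of \<Omega>]
  have "AE x in lebesgue_on \<Omega>. 0 \<le> - a4 x \<and> (\<beta> x + be0 x - u0 x \<noteq> 0 \<longrightarrow> - a4 x = 0)"
  proof (rule AE_complementarity_if_l2ip_nonpos[OF L2sp_uminus[OF a4]])
    show "(\<lambda>x. \<beta> x + be0 x - u0 x) \<in> borel_measurable (lebesgue_on \<Omega>)"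
      using b \<beta> by (auto simp: L2sp_def)
    show "AE x in lebesgue_on \<Omega>. 0 \<le> \<beta> x + be0 x - u0 x"
      using box by eventually_elim simp
    fix d assume d: "d \<in> L2sp \<Omega>" "AE x in lebesgue_on \<Omega>. d x \<le> \<beta> x + be0 x - u0 x"
    have "AE x in lebesgue_on \<Omega>. \<alpha> x + (al0 x + 0) \<le> u0 x + 0 \<and> u0 x + 0 \<le> \<beta> x + (be0 x + - d x)"
      using box d(2) by eventually_elim simp
    from frechet_normal_cone_gphUad_dir[OF zs zero zero zero L2sp_uminus[OF d(1)] zero this]
    show "l2ip \<Omega> (\<lambda>x. - a4 x) d \<le> 0" by (simp add: l2ip_def)
  qed
  then show ?thesis
    using AE_space by (intro conjI; eventually_elim, auto simp: Omega3_def e_be_def)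
qed

lemma Ppair_nonpos_if_AE_nonpos:
  assumes "(a1, a2, a3, a4) \<in> Esp \<Omega>" "us \<in> L2sp \<Omega>" "(d1, d2, d3, d4) \<in> Esp \<Omega>" "du \<in> L2sp \<Omega>"
    and "AE x in lebesgue_on \<Omega>.
      a1 x * d1 x + a2 x * d2 x + a3 x * d3 x + a4 x * d4 x + us x * du x \<le> 0"
  shows "Ppair \<Omega> ((a1, a2, a3, a4), us) ((d1, d2, d3, d4), du) \<le> 0"
proof -
  have int: "integrable (lebesgue_on \<Omega>) (\<lambda>x. a1 x * d1 x)" "integrable (lebesgue_on \<Omega>) (\<lambda>x. a2 x * d2 x)"
    "integrable (lebesgue_on \<Omega>) (\<lambda>x. a3 x * d3 x)" "integrable (lebesgue_on \<Omega>) (\<lambda>x. a4 x * d4 x)"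
    "integrable (lebesgue_on \<Omega>) (\<lambda>x. us x * du x)"
    using assms(1-4) by (auto simp: Esp_def e_y_def e_J_def e_al_def e_be_def intro: integrable_L2sp_mult)
  have "Ppair \<Omega> ((a1, a2, a3, a4), us) ((d1, d2, d3, d4), du) = integral\<^sup>L (lebesgue_on \<Omega>)
      (\<lambda>x. a1 x * d1 x + a2 x * d2 x + a3 x * d3 x + a4 x * d4 x + us x * du x)"
    using int by (simp add: Ppair_tuple l2ip_def)
  also have "\<dots> \<le> integral\<^sup>L (lebesgue_on \<Omega>) (\<lambda>x. 0)"
    using int assms(5) by (intro integral_mono_AE) auto
  finally show ?thesis by simp
qed

lemma frechet_normal_cone_gphUad_sufficient:
  assumes zb: "((y0, J0, al0, be0), u0) \<in> gphUad \<Omega> \<alpha> \<beta>"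
    and a: "(a1, a2, a3, a4) \<in> Esp \<Omega>" "us \<in> L2sp \<Omega>"
    and y: "AE x in lebesgue_on \<Omega>. a1 x = 0" and J: "AE x in lebesgue_on \<Omega>. a2 x = 0"
    and u: "AE x in lebesgue_on \<Omega>. us x = - a3 x - a4 x"
    and al_pos: "AE x in lebesgue_on \<Omega>. x \<in> Omega1 \<Omega> \<alpha> (y0, J0, al0, be0) u0 \<longrightarrow> 0 \<le> a3 x"
    and al_zero: "AE x in lebesgue_on \<Omega>. x \<notin> Omega1 \<Omega> \<alpha> (y0, J0, al0, be0) u0 \<longrightarrow> a3 x = 0"
    and be_neg: "AE x in lebesgue_on \<Omega>. x \<in> Omega3 \<Omega> \<beta> (y0, J0, al0, be0) u0 \<longrightarrow> a4 x \<le> 0"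
    and be_zero: "AE x in lebesgue_on \<Omega>. x \<notin> Omega3 \<Omega> \<beta> (y0, J0, al0, be0) u0 \<longrightarrow> a4 x = 0"
  shows "((a1, a2, a3, a4), us) \<in> frechet_normal_cone \<Omega> (gphUad \<Omega> \<alpha> \<beta>) ((y0, J0, al0, be0), u0)"
proof (rule frechet_normal_coneI_polar)
  show "fst ((a1, a2, a3, a4), us) \<in> Esp \<Omega>" "snd ((a1, a2, a3, a4), us) \<in> L2sp \<Omega>"
    using a by simp_all
  fix z assume "z \<in> gphUad \<Omega> \<alpha> \<beta>"
  moreover obtain y J al be u where z: "z = ((y, J, al, be), u)" by (metis prod.exhaust)
  ultimately have L2: "y \<in> L2sp \<Omega>" "J \<in> L2sp \<Omega>" "al \<in> L2sp \<Omega>" "be \<in> L2sp \<Omega>" "u \<in> L2sp \<Omega>"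
    and box: "AE x in lebesgue_on \<Omega>. \<alpha> x + al x \<le> u x \<and> u x \<le> \<beta> x + be x"
    by (simp_all add: gphUad_tuple_iff)
  have L2_0: "y0 \<in> L2sp \<Omega>" "J0 \<in> L2sp \<Omega>" "al0 \<in> L2sp \<Omega>" "be0 \<in> L2sp \<Omega>" "u0 \<in> L2sp \<Omega>"
    using zb by (simp_all add: gphUad_tuple_iff)
  have "AE x in lebesgue_on \<Omega>. a1 x * (y x - y0 x) + a2 x * (J x - J0 x) + a3 x * (al x - al0 x)
      + a4 x * (be x - be0 x) + us x * (u x - u0 x) \<le> 0"
    using AE_space y J u al_pos al_zero be_neg be_zero box
  proof eventually_elim
    case (elim x)
    have "a3 x * (\<alpha> x + al x - u x) \<le> 0" "a4 x * (\<beta> x + be x - u x) \<le> 0"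
      using elim by (auto simp: Omega1_def Omega3_def e_al_def e_be_def
          intro: mult_nonneg_nonpos mult_nonpos_nonneg)
    moreover have "a3 x * (\<alpha> x + al0 x - u0 x) = 0" "a4 x * (\<beta> x + be0 x - u0 x) = 0"
      using elim by (auto simp: Omega1_def Omega3_def e_al_def e_be_def)
    moreover have "a1 x * (y x - y0 x) + a2 x * (J x - J0 x) + a3 x * (al x - al0 x)
        + a4 x * (be x - be0 x) + us x * (u x - u0 x)
      = a3 x * (\<alpha> x + al x - u x) + a4 x * (\<beta> x + be x - u x)
        - a3 x * (\<alpha> x + al0 x - u0 x) - a4 x * (\<beta> x + be0 x - u0 x)"
      by (simp add: elim(2-4) algebra_simps)
    ultimately show ?case by linarith
  qed
  then show "Ppair \<Omega> ((a1, a2, a3, a4), us) (Psub z ((y0, J0, al0, be0), u0)) \<le> 0"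
    unfolding z Psub_tuple using a L2 L2_0
    by (intro Ppair_nonpos_if_AE_nonpos) (auto simp: Esp_def e_y_def e_J_def e_al_def e_be_def L2sp_diff)
qed (rule zb)

lemma frechet_normal_cone_gphUad_iff:
  assumes zb: "((y0, J0, al0, be0), u0) \<in> gphUad \<Omega> \<alpha> \<beta>"
    and \<alpha>: "\<alpha> \<in> borel_measurable (lebesgue_on \<Omega>)" and \<beta>: "\<beta> \<in> borel_measurable (lebesgue_on \<Omega>)"
  shows "((a1, a2, a3, a4), us) \<in> frechet_normal_cone \<Omega> (gphUad \<Omega> \<alpha> \<beta>) ((y0, J0, al0, be0), u0) \<longleftrightarrow>
    (a1, a2, a3, a4) \<in> Esp \<Omega> \<and> us \<in> L2sp \<Omega> \<and>
    (AE x in lebesgue_on \<Omega>. a1 x = 0) \<and> (AE x in lebesgue_on \<Omega>. a2 x = 0) \<and>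
    (AE x in lebesgue_on \<Omega>. us x = - a3 x - a4 x) \<and>
    (AE x in lebesgue_on \<Omega>. x \<in> Omega1 \<Omega> \<alpha> (y0, J0, al0, be0) u0 \<longrightarrow> 0 \<le> a3 x) \<and>
    (AE x in lebesgue_on \<Omega>. x \<notin> Omega1 \<Omega> \<alpha> (y0, J0, al0, be0) u0 \<longrightarrow> a3 x = 0) \<and>
    (AE x in lebesgue_on \<Omega>. x \<in> Omega3 \<Omega> \<beta> (y0, J0, al0, be0) u0 \<longrightarrow> a4 x \<le> 0) \<and>
    (AE x in lebesgue_on \<Omega>. x \<notin> Omega3 \<Omega> \<beta> (y0, J0, al0, be0) u0 \<longrightarrow> a4 x = 0)"
    (is "_ \<longleftrightarrow> _ \<and> _ \<and> ?conditions")
proof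
  assume "((a1, a2, a3, a4), us) \<in> frechet_normal_cone \<Omega> (gphUad \<Omega> \<alpha> \<beta>) ((y0, J0, al0, be0), u0)"
  with frechet_normal_cone_gphUad_equalities[OF this] frechet_normal_cone_gphUad_lower[OF this \<alpha>]
    frechet_normal_cone_gphUad_upper[OF this \<beta>] show "(a1, a2, a3, a4) \<in> Esp \<Omega> \<and> us \<in> L2sp \<Omega> \<and> ?conditions"
    by (simp add: frechet_normal_cone_def)
qed (use frechet_normal_cone_gphUad_sufficient[OF zb] in blast)

theorem lemma3p2:
  fixes \<Omega> :: "(real^'n) set"
    and a :: "'n \<Rightarrow> 'n \<Rightarrow> real^'n \<Rightarrow> real"
    and f fy fyy L Ly Lyy :: "real^'n \<Rightarrow> real \<Rightarrow> real"
    and \<alpha> \<beta> \<zeta> :: "real^'n \<Rightarrow> real"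
    and Q :: "(real^'n \<Rightarrow> real) set"
    and pbar :: real
    and eb :: "'n pert" and ub :: "real^'n \<Rightarrow> real"
  assumes dim: "CARD('n) \<le> 3"
    \<comment> \<open>data alpha, beta, zeta\<close>
    and alpha: "\<alpha> \<in> Linf \<Omega>" and beta: "\<beta> \<in> Linf \<Omega>"
    and alpha_le_beta: "AE x in lebesgue_on \<Omega>. \<alpha> x \<le> \<beta> x"
    and alpha_neq_beta: "\<not> (AE x in lebesgue_on \<Omega>. \<alpha> x = \<beta> x)"
    and zeta: "\<zeta> \<in> L2sp \<Omega>" "AE x in lebesgue_on \<Omega>. \<zeta> x \<ge> 0"
    \<comment> \<open>exponent pbar\<close>
    and pbar: "pbar > real CARD('n) / 2"
    \<comment> \<open>(A1): f Caratheodory, C^2 in y, fy, fyy its derivatives\<close>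
    and f_meas: "\<And>t. (\<lambda>x. f x t) \<in> borel_measurable (lebesgue_on \<Omega>)"
    and f_C2: "AE x in lebesgue_on \<Omega>. \<forall>t. (f x has_real_derivative fy x t) (at t) \<and>
                  (fy x has_real_derivative fyy x t) (at t) \<and> isCont (fyy x) t"
    and f0: "(\<lambda>x. f x 0) \<in> Lp \<Omega> pbar"
    and fy_nonneg: "AE x in lebesgue_on \<Omega>. \<forall>t. fy x t \<ge> 0"
    and f_bound: "\<And>M. \<exists>C. AE x in lebesgue_on \<Omega>. \<forall>t. \<bar>t\<bar> \<le> M \<longrightarrow> \<bar>fy x t\<bar> + \<bar>fyy x t\<bar> \<le> C"
    and fyy_uc: "\<And>M \<epsilon>. \<epsilon> > 0 \<Longrightarrow> \<exists>\<delta>>0. AE x in lebesgue_on \<Omega>. \<forall>s t.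
                  \<bar>s\<bar> \<le> M \<and> \<bar>t\<bar> \<le> M \<and> \<bar>s - t\<bar> < \<delta> \<longrightarrow> \<bar>fyy x s - fyy x t\<bar> < \<epsilon>"
    \<comment> \<open>(A2): L Caratheodory, C^2 in y, Ly, Lyy its derivatives\<close>
    and L_meas: "\<And>t. (\<lambda>x. L x t) \<in> borel_measurable (lebesgue_on \<Omega>)"
    and L_C2: "AE x in lebesgue_on \<Omega>. \<forall>t. (L x has_real_derivative Ly x t) (at t) \<and>
                  (Ly x has_real_derivative Lyy x t) (at t) \<and> isCont (Lyy x) t"
    and L0: "integrable (lebesgue_on \<Omega>) (\<lambda>x. L x 0)"
    and Ly_bound: "\<And>M. \<exists>\<psi>. \<psi> \<in> Lp \<Omega> pbar \<and>
                      (AE x in lebesgue_on \<Omega>. \<forall>t. \<bar>t\<bar> \<le> M \<longrightarrow> \<bar>Ly x t\<bar> \<le> \<psi> x)"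
    and Lyy_bound: "\<And>M. \<exists>C. AE x in lebesgue_on \<Omega>. \<forall>t. \<bar>t\<bar> \<le> M \<longrightarrow> \<bar>Lyy x t\<bar> \<le> C"
    and Lyy_uc: "\<And>M \<epsilon>. \<epsilon> > 0 \<Longrightarrow> \<exists>\<delta>>0. AE x in lebesgue_on \<Omega>. \<forall>s t.
                  \<bar>s\<bar> \<le> M \<and> \<bar>t\<bar> \<le> M \<and> \<bar>s - t\<bar> < \<delta> \<longrightarrow> \<bar>Lyy x s - Lyy x t\<bar> < \<epsilon>"
    \<comment> \<open>(A3): domain\<close>
    and Omega_open: "open \<Omega>" and Omega_bdd: "bounded \<Omega>"
    and Omega_lip: "lipschitz_boundary \<Omega>"
    \<comment> \<open>(A3): Q closed convex bounded in L^2 (a set of L^2 classes)\<close>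
    and Q_L2: "Q \<subseteq> L2sp \<Omega>"
    and Q_classes: "\<And>q v. q \<in> Q \<Longrightarrow> v \<in> L2sp \<Omega> \<Longrightarrow> (AE x in lebesgue_on \<Omega>. q x = v x) \<Longrightarrow> v \<in> Q"
    and Q_closed: "\<And>qs v. (\<forall>k. qs k \<in> Q) \<Longrightarrow> v \<in> L2sp \<Omega> \<Longrightarrow>
                      (\<lambda>k. l2nrm \<Omega> (qs k - v)) \<longlonglongrightarrow> 0 \<Longrightarrow> v \<in> Q"
    and Q_convex: "\<And>q1 q2 t. q1 \<in> Q \<Longrightarrow> q2 \<in> Q \<Longrightarrow> 0 \<le> t \<Longrightarrow> t \<le> 1 \<Longrightarrow>
                      (\<lambda>x. t * q1 x + (1 - t) * q2 x) \<in> Q"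
    and Q_bdd: "\<exists>C. \<forall>q\<in>Q. l2nrm \<Omega> q \<le> C"
    and Q_int: "\<exists>e0\<in>Esp \<Omega>. \<exists>u\<in>Uad \<Omega> \<alpha> \<beta> e0. \<exists>r>0.
                   \<forall>v\<in>L2sp \<Omega>. l2nrm \<Omega> (v - u) < r \<longrightarrow> v \<in> Q"
    \<comment> \<open>(A3): coefficients continuous on the closure, uniformly elliptic\<close>
    and a_cont: "\<And>i j. continuous_on (closure \<Omega>) (a i j)"
    and a_ell: "\<exists>lam>0. \<forall>x\<in>closure \<Omega>. \<forall>\<xi>::real^'n.
                   (\<Sum>i\<in>UNIV. \<Sum>j\<in>UNIV. a i j x * \<xi>$i * \<xi>$j) \<ge> lam * (norm \<xi>)^2"
    \<comment> \<open>the reference point\<close>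
    and eb: "eb \<in> Esp \<Omega>"
    and ub: "ub \<in> Sopt \<Omega> a f L \<zeta> \<alpha> \<beta> Q eb"
  shows "frechet_normal_cone \<Omega> (gphUad \<Omega> \<alpha> \<beta>) (eb, ub) =
    {(es, us). es \<in> Esp \<Omega> \<and> us \<in> L2sp \<Omega> \<and>
       (AE x in lebesgue_on \<Omega>. e_y es x = 0) \<and>
       (AE x in lebesgue_on \<Omega>. e_J es x = 0) \<and>
       (AE x in lebesgue_on \<Omega>. us x = - e_al es x - e_be es x) \<and>
       (AE x in lebesgue_on \<Omega>. x \<in> Omega1 \<Omega> \<alpha> eb ub \<longrightarrow> e_al es x \<ge> 0) \<and>
       (AE x in lebesgue_on \<Omega>. x \<notin> Omega1 \<Omega> \<alpha> eb ub \<longrightarrow> e_al es x = 0) \<and>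
       (AE x in lebesgue_on \<Omega>. x \<in> Omega3 \<Omega> \<beta> eb ub \<longrightarrow> e_be es x \<le> 0) \<and>
       (AE x in lebesgue_on \<Omega>. x \<notin> Omega3 \<Omega> \<beta> eb ub \<longrightarrow> e_be es x = 0)}"
proof -
  obtain y0 J0 al0 be0 where eb_split: "eb = (y0, J0, al0, be0)" by (metis prod.exhaust)
  have zb: "((y0, J0, al0, be0), ub) \<in> gphUad \<Omega> \<alpha> \<beta>"
    using eb ub by (simp add: eb_split gphUad_def Sopt_def Gfeas_def)
  have "\<alpha> \<in> borel_measurable (lebesgue_on \<Omega>)" "\<beta> \<in> borel_measurable (lebesgue_on \<Omega>)"
    using alpha beta by (simp_all add: Linf_def)
  note normal_cone_iff = frechet_normal_cone_gphUad_iff[OF zb this]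
  show ?thesis (is "?normals = ?characterized")
  proof (rule set_eqI)
    fix z :: "'n pert \<times> 'n fn"
    obtain a1 a2 a3 a4 us where "z = ((a1, a2, a3, a4), us)" by (metis prod.exhaust)
    then show "z \<in> ?normals \<longleftrightarrow> z \<in> ?characterized"
      by (simp add: eb_split normal_cone_iff e_y_def e_J_def e_al_def e_be_def)
  qed
qed

end
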